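(* Let $n\ge1$ and let $f$ be an automorphism of the additive group $\mathbb{Z}^n$. Then the set of lengths of the cycles of $f$ is finite.
   Context: For a bijection $f$ of a set, a cycle is a finite sequence $a_1,\dots,a_m$ of distinct elements with $f(a_j)=a_{j+1}$ for $j<m$ and $f(a_m)=a_1$; its length is $m$. *)

theory Defs
  imports "HOL-Analysis.Analysis"
begin

definition is_cycle :: "('a \<Rightarrow> 'a) \<Rightarrow> 'a list \<Rightarrow> bool" where
  "is_cycle f xs \<longleftrightarrow> xs \<noteq> [] \<and> distinct xs \<and>
     (\<forall>j. Suc j < length xs \<longrightarrow> f (xs ! j) = xs ! Suc j) \<and>
     f (last xs) = hd xs"

definition cycle_lengths :: "('a \<Rightarrow> 'a) \<Rightarrow> nat set" where
  "cycle_lengths f = {length xs | xs. is_cycle f xs}"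

end

theory Submission
  imports Defs
begin

(*
  The length of a cycle through x is at most any p > 0 with f^p x = x, so it suffices to find
  one L > 0 with f^L x = x for every periodic point x. Extend the additive map f to a linear map
  T of real n-space and choose a maximal linearly independent family of periodic points: it is
  finite, so the product L of their periods is a common period of the family, and since T^L is
  linear it fixes their span, which contains every periodic point.
*)

lemma funpow_mult_fixed:
  assumes "(f ^^ p) x = x"
  shows "(f ^^ (p * k)) x = x"
  by (induction k) (simp_all add: funpow_add assms)

lemma linear_funpow:
  fixes T :: "'a::real_vector \<Rightarrow> 'a"
  shows "linear T \<Longrightarrow> linear (T ^^ n)"
  by (induction n) (simp_all add: linear_id linear_compose)

lemma linear_common_period_on_span:
  fixes T :: "'a::euclidean_space \<Rightarrow> 'a"
  assumes "linear T"
  obtains L where "L > 0" "\<And>v. v \<in> span {v. \<exists>p>0. (T ^^ p) v = v} \<Longrightarrow> (T ^^ L) v = v"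
proof -
  let ?P = "{v. \<exists>p>0. (T ^^ p) v = v}"
  obtain B where B: "B \<subseteq> ?P" "independent B" "?P \<subseteq> span B"
    using maximal_independent_subset by blast
  have "finite B"
    using B(2) by (rule independent_imp_finite)
  have "\<forall>b\<in>B. \<exists>p. p > 0 \<and> (T ^^ p) b = b"
    using B(1) by blast
  then obtain per where per: "\<And>b. b \<in> B \<Longrightarrow> per b > 0 \<and> (T ^^ per b) b = b"
    by metis
  define L where "L = prod per B"
  have "L > 0"
    unfolding L_def using per \<open>finite B\<close> by (simp add: prod_pos)
  have fixes_B: "(T ^^ L) b = b" if "b \<in> B" for b
  proof -
    have "L = per b * prod per (B - {b})"
      unfolding L_def using \<open>finite B\<close> that by (simp add: prod.remove)
    then show ?thesis
      using funpow_mult_fixed[where f = T and p = "per b" and x = b] per[OF that] by simp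
  qed
  have "(T ^^ L) v = v" if "v \<in> span ?P" for v
  proof -
    have "v \<in> span B"
      using that span_mono[OF B(3)] by (simp add: span_span subset_iff)
    then show ?thesis
      using linear_eq_on_span[OF linear_funpow[OF assms] linear_id] fixes_B
      by (simp only: id_apply) blast
  qed
  with \<open>L > 0\<close> that show ?thesis by blast
qed

definition of_int_vec :: "int ^ 'n \<Rightarrow> real ^ 'n" where
  "of_int_vec x = (\<chi> i. of_int (x $ i))"

lemma of_int_vec_nth [simp]: "of_int_vec x $ i = of_int (x $ i)"
  by (simp add: of_int_vec_def)

lemma inj_of_int_vec: "inj of_int_vec"
  by (rule injI) (simp add: vec_eq_iff)

lemma of_int_vec_sum: "of_int_vec (sum h A) = (\<Sum>a\<in>A. of_int_vec (h a))"
  by (induction A rule: infinite_finite_induct) (auto simp: vec_eq_iff)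

lemma of_int_vec_smult: "of_int_vec (k *s v) = of_int k *\<^sub>R of_int_vec v"
  by (simp add: vec_eq_iff)

lemma additive_vector_smult_int:
  fixes g :: "int ^ 'n \<Rightarrow> int ^ 'm"
  assumes "Modules.additive g"
  shows "g (k *s v) = k *s g v"
  by (induction k rule: int_induct[of _ 0])
    (simp_all add: additive.zero[OF assms] additive.add[OF assms] additive.diff[OF assms])

definition real_extension :: "(int ^ 'n \<Rightarrow> int ^ 'm) \<Rightarrow> real ^ 'n \<Rightarrow> real ^ 'm" where
  "real_extension g y = (\<Sum>i\<in>UNIV. y $ i *\<^sub>R of_int_vec (g (axis i 1)))"

lemma linear_real_extension: "linear (real_extension g)"
  unfolding linear_iff real_extension_def
  by (auto simp: sum.distrib scaleR_add_left scaleR_sum_right)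

lemma real_extension_of_int_vec:
  fixes g :: "int ^ 'n \<Rightarrow> int ^ 'm"
  assumes "Modules.additive g"
  shows "real_extension g (of_int_vec x) = of_int_vec (g x)"
proof -
  have "g x = g (\<Sum>i\<in>UNIV. x $ i *s axis i 1)"
    by (simp add: basis_expansion)
  also have "\<dots> = (\<Sum>i\<in>UNIV. x $ i *s g (axis i 1))"
    by (simp add: additive.sum[OF assms] additive_vector_smult_int[OF assms])
  finally show ?thesis
    by (simp add: real_extension_def of_int_vec_sum of_int_vec_smult)
qed

lemma funpow_real_extension_of_int_vec:
  fixes g :: "int ^ 'n \<Rightarrow> int ^ 'n"
  assumes "Modules.additive g"
  shows "(real_extension g ^^ p) (of_int_vec x) = of_int_vec ((g ^^ p) x)"
  by (induction p) (simp_all add: real_extension_of_int_vec[OF assms])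

lemma additive_int_vec_common_period:
  fixes g :: "int ^ 'n \<Rightarrow> int ^ 'n"
  assumes "Modules.additive g"
  obtains L where "L > 0" "\<And>x p. p > 0 \<Longrightarrow> (g ^^ p) x = x \<Longrightarrow> (g ^^ L) x = x"
proof -
  let ?T = "real_extension g"
  obtain L where "L > 0"
    and L: "\<And>v. v \<in> span {v. \<exists>p>0. (?T ^^ p) v = v} \<Longrightarrow> (?T ^^ L) v = v"
    using linear_common_period_on_span[OF linear_real_extension] by blast
  have "(g ^^ L) x = x" if "p > 0" "(g ^^ p) x = x" for x p
  proof -
    have "(?T ^^ p) (of_int_vec x) = of_int_vec x"
      using that by (simp add: funpow_real_extension_of_int_vec[OF assms])
    then have "(?T ^^ L) (of_int_vec x) = of_int_vec x"
      using \<open>p > 0\<close> by (blast intro: L span_base)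
    then show ?thesis
      by (simp add: funpow_real_extension_of_int_vec[OF assms] inj_eq[OF inj_of_int_vec])
  qed
  with \<open>L > 0\<close> that show ?thesis by blast
qed

lemma is_cycle_funpow_nth:
  assumes "is_cycle f xs" "j < length xs"
  shows "(f ^^ j) (hd xs) = xs ! j"
  using assms(2)
proof (induction j)
  case 0
  then show ?case by (simp add: hd_conv_nth)
next
  case (Suc j)
  then show ?case using assms(1) unfolding is_cycle_def by auto
qed

lemma is_cycle_funpow_length:
  assumes "is_cycle f xs"
  shows "(f ^^ length xs) (hd xs) = hd xs"
proof -
  have "xs \<noteq> []"
    using assms by (simp add: is_cycle_def)
  then obtain m where m: "length xs = Suc m"
    by (cases xs) auto
  have "(f ^^ length xs) (hd xs) = f (xs ! m)"
    using is_cycle_funpow_nth[OF assms, of m] m by simp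
  also have "xs ! m = last xs"
    using \<open>xs \<noteq> []\<close> m by (simp add: last_conv_nth)
  finally show ?thesis
    using assms by (simp add: is_cycle_def)
qed

lemma is_cycle_length_le_period:
  assumes "is_cycle f xs" "L > 0" "(f ^^ L) (hd xs) = hd xs"
  shows "length xs \<le> L"
proof (rule ccontr)
  assume "\<not> length xs \<le> L"
  then have "xs \<noteq> []"
    by auto
  have "xs ! L = hd xs"
    using is_cycle_funpow_nth[OF assms(1), of L] assms(3) \<open>\<not> length xs \<le> L\<close> by simp
  also have "hd xs = xs ! 0"
    using \<open>xs \<noteq> []\<close> by (rule hd_conv_nth)
  finally show False
    using assms(1,2) \<open>\<not> length xs \<le> L\<close> by (simp add: is_cycle_def nth_eq_iff_index_eq)
qed

lemma finite_cycle_lengths_if_common_period: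
  assumes "L > 0" "\<And>x p. p > 0 \<Longrightarrow> (f ^^ p) x = x \<Longrightarrow> (f ^^ L) x = x"
  shows "finite (cycle_lengths f)"
proof (rule finite_subset)
  show "cycle_lengths f \<subseteq> {..L}"
  proof
    fix m assume "m \<in> cycle_lengths f"
    then obtain xs where xs: "is_cycle f xs" "m = length xs"
      by (auto simp: cycle_lengths_def)
    then have "length xs > 0"
      by (simp add: is_cycle_def)
    then have "(f ^^ L) (hd xs) = hd xs"
      using assms(2) is_cycle_funpow_length[OF xs(1)] by blast
    then show "m \<in> {..L}"
      using is_cycle_length_le_period[OF xs(1) assms(1)] xs(2) by simp
  qed
qed simp

theorem proposition3p2:
  fixes f :: "int ^ 'n \<Rightarrow> int ^ 'n"
  assumes "bij f"
    and "\<And>x y. f (x + y) = f x + f y"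
  shows "finite (cycle_lengths f)"
proof -
  have "Modules.additive f"
    using assms(2) by (rule additive.intro)
  then obtain L where "L > 0" "\<And>x p. p > 0 \<Longrightarrow> (f ^^ p) x = x \<Longrightarrow> (f ^^ L) x = x"
    using additive_int_vec_common_period by blast
  then show ?thesis
    by (rule finite_cycle_lengths_if_common_period)
qed

end
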